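(* Let $\nu$ be a fixed order, $a<b$, and $f,g\in C^{\infty}[a,b]$ with $g(x)\neq0$ and $g'(x)\neq0$ for all $x\in[a,b]$. Let $\mathcal{H}_{\nu}[f]=\int_a^b f(x)J_\nu(\omega g(x))\,dx$, let $\sigma_0[f]=f$ and $\sigma_k[f](x)=g(x)^{\nu+k}\frac{d}{dx}\left[\frac{\sigma_{k-1}[f](x)}{g(x)^{\nu+k}g'(x)}\right]$ for $k\ge1$, and for an integer $m\ge1$ let $$Q_m^A[f]=-\sum_{k=1}^{m}\frac{1}{(-\omega)^k}\left\{\frac{\sigma_{k-1}[f](b)}{g'(b)}J_{\nu+k}(\omega g(b))-\frac{\sigma_{k-1}[f](a)}{g'(a)}J_{\nu+k}(\omega g(a))\right\}.$$ Then $\mathcal{H}_\nu[f]-Q_m^A[f]=\mathcal{O}(\omega^{-m-3/2})$ as $\omega\to\infty$.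
   Context: $J_\nu$ is the Bessel function of the first kind of order $\nu$. *)

theory Defs
  imports "HOL-Analysis.Analysis" "HOL-Library.Landau_Symbols"
begin

text \<open>Bessel function of the first kind, via its power series, with the principal
  branch of the complex power; 1/Gamma is written rGamma (entire).
  (z/2)^(2k+nu) is written (z/2)^(2k) * (z/2) powr nu.\<close>
definition BesselJ :: "complex \<Rightarrow> complex \<Rightarrow> complex" where
  "BesselJ \<nu> z = (\<Sum>k. (-1) ^ k * rGamma (of_nat k + \<nu> + 1) / fact k
                       * (z / 2) ^ (2 * k) * (z / 2) powr \<nu>)"

definition smooth_fun :: "(real \<Rightarrow> real) \<Rightarrow> bool" where
  "smooth_fun f \<longleftrightarrow> (\<forall>n x. ((deriv ^^ n) f) differentiable (at x))"

text \<open>g(x)^mu, principal branch (agrees with the real power when g(x) > 0).\<close>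
definition gpow :: "(real \<Rightarrow> real) \<Rightarrow> real \<Rightarrow> real \<Rightarrow> complex" where
  "gpow g \<mu> x = complex_of_real (g x) powr complex_of_real \<mu>"

fun sigma :: "real \<Rightarrow> (real \<Rightarrow> real) \<Rightarrow> (real \<Rightarrow> real) \<Rightarrow> nat \<Rightarrow> real \<Rightarrow> complex" where
  "sigma \<nu> f g 0 = (\<lambda>x. complex_of_real (f x))"
| "sigma \<nu> f g (Suc k) = (\<lambda>x. gpow g (\<nu> + real (Suc k)) x *
      vector_derivative (\<lambda>y. sigma \<nu> f g k y /
          (gpow g (\<nu> + real (Suc k)) y * complex_of_real (deriv g y))) (at x))"

definition Hnu :: "real \<Rightarrow> (real \<Rightarrow> real) \<Rightarrow> (real \<Rightarrow> real) \<Rightarrow> real \<Rightarrow> real \<Rightarrow> real \<Rightarrow> complex" where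
  "Hnu \<nu> f g a b \<omega> = integral {a..b}
      (\<lambda>x. complex_of_real (f x) * BesselJ (complex_of_real \<nu>) (complex_of_real (\<omega> * g x)))"

definition QA :: "real \<Rightarrow> (real \<Rightarrow> real) \<Rightarrow> (real \<Rightarrow> real) \<Rightarrow> real \<Rightarrow> real \<Rightarrow> nat \<Rightarrow> real \<Rightarrow> complex" where
  "QA \<nu> f g a b m \<omega> = - (\<Sum>k=1..m. 1 / complex_of_real ((-\<omega>) ^ k) *
      (sigma \<nu> f g (k - 1) b / complex_of_real (deriv g b)
         * BesselJ (complex_of_real (\<nu> + real k)) (complex_of_real (\<omega> * g b))
       - sigma \<nu> f g (k - 1) a / complex_of_real (deriv g a)
         * BesselJ (complex_of_real (\<nu> + real k)) (complex_of_real (\<omega> * g a))))"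

end

theory Submission
  imports Defs
begin

text \<open>Write \<open>g = s h\<close> with \<open>s = \<plusminus>1\<close> and \<open>h > 0\<close> near \<open>[a,b]\<close>. For real arguments the
  principal branch gives \<open>J_\<mu>(s t) = e J_\<mu>(t)\<close> and \<open>(s t)^\<mu> = e t^\<mu>\<close> with one phase \<open>e\<close>
  (\<open>1\<close>, or \<open>exp(i \<pi> \<mu>)\<close> if \<open>s = -1\<close>), and raising the order by \<open>k\<close> multiplies the phase by
  \<open>s^k\<close>. So everything reduces to the Bessel function on \<open>t > 0\<close> and to real functions \<open>r_k\<close>
  with \<open>\<sigma>_k = s^k r_k\<close>. From \<open>J_\<mu>' = J_(\<mu>-1) - \<mu> J_\<mu> / t\<close>, integration by parts gives
  \<open>\<omega> \<integral> r_j J_(\<nu>+j)(\<omega> h) + \<integral> r_(j+1) J_(\<nu>+j+1)(\<omega> h) = [r_j / h' J_(\<nu>+j+1)(\<omega> h)]_a^b\<close>,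
  so after \<open>m\<close> steps the error is \<open>\<plusminus>\<omega>^(-m) \<integral> r_m J_(\<nu>+m)(\<omega> h)\<close>. One more step together with
  the decay \<open>J_\<mu>(t) = O(t^(-1/2))\<close>, proved by an energy estimate, bounds it by \<open>O(\<omega>^(-m-3/2))\<close>.\<close>

section \<open>Smooth functions on open sets\<close>

fun C_on :: "nat \<Rightarrow> real set \<Rightarrow> (real \<Rightarrow> real) \<Rightarrow> bool" where
  "C_on 0 U f \<longleftrightarrow> continuous_on U f"
| "C_on (Suc n) U f \<longleftrightarrow> (\<forall>x\<in>U. f differentiable (at x)) \<and> C_on n U (deriv f)"

definition smooth_on :: "real set \<Rightarrow> (real \<Rightarrow> real) \<Rightarrow> bool" where
  "smooth_on U f \<longleftrightarrow> (\<forall>n. C_on n U f)"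

lemma C_on_cong:
  assumes "open U" "C_on n U f" "\<And>x. x \<in> U \<Longrightarrow> f x = g x"
  shows "C_on n U g"
  using assms(2,3)
proof (induction n arbitrary: f g)
  case 0
  then show ?case using continuous_on_cong by auto
next
  case (Suc n)
  have ev: "\<forall>\<^sub>F y in nhds x. f y = g y" if "x \<in> U" for x
    using eventually_nhds_in_open[OF assms(1) that] by eventually_elim (use Suc.prems in auto)
  have "g differentiable (at x)" if x: "x \<in> U" for x
  proof -
    obtain D where "(f has_real_derivative D) (at x)"
      using Suc.prems(1) x by (auto simp: real_differentiable_def)
    then show ?thesis
      using DERIV_cong_ev[OF refl ev[OF x] refl] by (auto simp: real_differentiable_def)
  qed
  moreover have "C_on n U (deriv g)"
  proof (rule Suc.IH)
    show "C_on n U (deriv f)" using Suc.prems(1) by simp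
    show "deriv f x = deriv g x" if "x \<in> U" for x using ev[OF that] by (rule deriv_cong_ev) simp
  qed
  ultimately show ?case by simp
qed

lemma C_on_SucI:
  assumes "open U" "\<And>x. x \<in> U \<Longrightarrow> (f has_real_derivative f' x) (at x)" "C_on n U f'"
  shows "C_on (Suc n) U f"
proof -
  have "C_on n U (deriv f)"
    by (rule C_on_cong[OF assms(1,3)]) (simp add: DERIV_imp_deriv[OF assms(2)])
  then show ?thesis using assms(2) by (auto simp: real_differentiable_def)
qed

lemma C_on_SucD: "C_on (Suc n) U f \<Longrightarrow> C_on n U f"
proof (induction n arbitrary: f)
  case 0
  then show ?case
    by (auto intro!: continuous_at_imp_continuous_on differentiable_imp_continuous_within)
next
  case (Suc n)
  then show ?case by (metis C_on.simps(2))
qed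

lemma DERIV_deriv_C_on: "C_on (Suc n) U f \<Longrightarrow> x \<in> U \<Longrightarrow> (f has_real_derivative deriv f x) (at x)"
  by (simp add: DERIV_deriv_iff_real_differentiable)

lemma C_on_const: "C_on n U (\<lambda>x. c)"
  by (induction n arbitrary: c) auto

lemma C_on_add: "open U \<Longrightarrow> C_on n U f \<Longrightarrow> C_on n U g \<Longrightarrow> C_on n U (\<lambda>x. f x + g x)"
proof (induction n arbitrary: f g)
  case (Suc n)
  have "C_on n U (\<lambda>x. deriv f x + deriv g x)"
    using Suc.prems by (intro Suc.IH) simp_all
  moreover have "((\<lambda>x. f x + g x) has_real_derivative deriv f x + deriv g x) (at x)"
    if "x \<in> U" for x
    using Suc.prems that by (intro DERIV_add DERIV_deriv_C_on)
  ultimately show ?case by (rule C_on_SucI[OF Suc.prems(1), rotated])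
qed (auto intro: continuous_on_add)

lemma C_on_mult: "open U \<Longrightarrow> C_on n U f \<Longrightarrow> C_on n U g \<Longrightarrow> C_on n U (\<lambda>x. f x * g x)"
proof (induction n arbitrary: f g)
  case (Suc n)
  have "C_on n U (\<lambda>x. deriv f x * g x + deriv g x * f x)"
    using Suc.prems C_on_SucD[OF Suc.prems(2)] C_on_SucD[OF Suc.prems(3)]
    by (intro C_on_add Suc.IH) simp_all
  moreover have "((\<lambda>x. f x * g x) has_real_derivative deriv f x * g x + deriv g x * f x) (at x)"
    if "x \<in> U" for x
    using Suc.prems that by (intro DERIV_mult DERIV_deriv_C_on)
  ultimately show ?case by (rule C_on_SucI[OF Suc.prems(1), rotated])
qed (auto intro: continuous_on_mult)

lemma C_on_inverse:
  "open U \<Longrightarrow> C_on n U f \<Longrightarrow> \<forall>x\<in>U. f x \<noteq> 0 \<Longrightarrow> C_on n U (\<lambda>x. inverse (f x))"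
proof (induction n arbitrary: f)
  case (Suc n)
  have "C_on n U (\<lambda>x. (- 1) * (deriv f x * (inverse (f x) * inverse (f x))))"
    using Suc.prems C_on_SucD[OF Suc.prems(2)] by (intro C_on_mult C_on_const Suc.IH) simp_all
  moreover have "((\<lambda>x. inverse (f x)) has_real_derivative
      (- 1) * (deriv f x * (inverse (f x) * inverse (f x)))) (at x)" if "x \<in> U" for x
    using Suc.prems that
    by (intro DERIV_cong[OF DERIV_inverse_fun[OF DERIV_deriv_C_on]]) (auto simp: power2_eq_square)
  ultimately show ?case by (rule C_on_SucI[OF Suc.prems(1), rotated])
qed (auto intro: continuous_on_inverse)

lemma smooth_on_const: "smooth_on U (\<lambda>x. c)"
  by (simp add: smooth_on_def C_on_const)

lemma smooth_on_add: "open U \<Longrightarrow> smooth_on U f \<Longrightarrow> smooth_on U g \<Longrightarrow> smooth_on U (\<lambda>x. f x + g x)"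
  by (simp add: smooth_on_def C_on_add)

lemma smooth_on_mult: "open U \<Longrightarrow> smooth_on U f \<Longrightarrow> smooth_on U g \<Longrightarrow> smooth_on U (\<lambda>x. f x * g x)"
  by (simp add: smooth_on_def C_on_mult)

lemma smooth_on_diff: "open U \<Longrightarrow> smooth_on U f \<Longrightarrow> smooth_on U g \<Longrightarrow> smooth_on U (\<lambda>x. f x - g x)"
  using smooth_on_add[of U f "\<lambda>x. (- 1) * g x"] smooth_on_mult[of U "\<lambda>x. - 1" g]
  by (simp add: smooth_on_const)

lemma smooth_on_divide:
  "open U \<Longrightarrow> smooth_on U f \<Longrightarrow> smooth_on U g \<Longrightarrow> \<forall>x\<in>U. g x \<noteq> 0 \<Longrightarrow> smooth_on U (\<lambda>x. f x / g x)"
  by (simp add: smooth_on_def divide_inverse C_on_mult C_on_inverse)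

lemma smooth_on_deriv: "smooth_on U f \<Longrightarrow> smooth_on U (deriv f)"
  by (metis smooth_on_def C_on.simps(2))

lemma DERIV_deriv_smooth_on: "smooth_on U f \<Longrightarrow> x \<in> U \<Longrightarrow> (f has_real_derivative deriv f x) (at x)"
  by (meson smooth_on_def DERIV_deriv_C_on)

lemma differentiable_smooth_on: "smooth_on U f \<Longrightarrow> x \<in> U \<Longrightarrow> f differentiable (at x)"
  using DERIV_deriv_smooth_on real_differentiable_def by blast

lemma smooth_on_imp_continuous_on: "smooth_on U f \<Longrightarrow> continuous_on U f"
  by (metis smooth_on_def C_on.simps(1))

lemma smooth_fun_imp_smooth_on:
  assumes "smooth_fun f"
  shows "smooth_on U f"
proof -
  have "C_on n U ((deriv ^^ j) f)" for n j
  proof (induction n arbitrary: j)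
    case 0
    show ?case using assms unfolding smooth_fun_def
      by (auto intro!: continuous_at_imp_continuous_on differentiable_imp_continuous_within)
  next
    case (Suc n)
    show ?case using assms Suc[of "Suc j"] unfolding smooth_fun_def by simp
  qed
  from this[of _ 0] show ?thesis unfolding smooth_on_def by simp
qed

section \<open>The Bessel function on the positive axis\<close>

definition bessel_coeff :: "real \<Rightarrow> nat \<Rightarrow> real" where
  "bessel_coeff \<mu> k = (-1) ^ k * rGamma (real k + \<mu> + 1) / fact k"

definition bessel_series :: "real \<Rightarrow> real \<Rightarrow> real" where
  "bessel_series \<mu> w = (\<Sum>k. bessel_coeff \<mu> k * w ^ k)"

text \<open>The real power makes \<open>Jreal \<mu> t\<close> the Bessel function \<open>J\<^sub>\<mu>(t)\<close> only for \<open>t > 0\<close>.\<close>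
definition Jreal :: "real \<Rightarrow> real \<Rightarrow> real" where
  "Jreal \<mu> t = bessel_series \<mu> ((t / 2)\<^sup>2) * (t / 2) powr \<mu>"

lemma bessel_coeff_Suc:
  "bessel_coeff \<mu> k = - (real k + \<mu> + 1) * (real k + 1) * bessel_coeff \<mu> (Suc k)"
proof -
  have r: "rGamma (real k + \<mu> + 1) = (real k + \<mu> + 1) * rGamma (real (Suc k) + \<mu> + 1)"
    using rGamma_plus1[of "real k + \<mu> + 1"] by (simp add: add_ac)
  have f: "fact (Suc k) = (real k + 1) * (fact k :: real)"
    by (simp add: algebra_simps)
  show ?thesis
    unfolding bessel_coeff_def r f power_Suc by (simp add: divide_simps) (simp add: algebra_simps)
qed

lemma summable_bessel_series: "summable (\<lambda>k. bessel_coeff \<mu> k * w ^ k)"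
proof (rule summable_ratio_test[where c = "1/2" and N = "nat \<lceil>2 * \<bar>w\<bar> + \<bar>\<mu>\<bar>\<rceil> + 1"])
  fix n assume "n \<ge> nat \<lceil>2 * \<bar>w\<bar> + \<bar>\<mu>\<bar>\<rceil> + 1"
  then have n: "real n \<ge> 2 * \<bar>w\<bar> + \<bar>\<mu>\<bar> + 1" by linarith
  have "1 * (2 * \<bar>w\<bar>) \<le> \<bar>real n + \<mu> + 1\<bar> * (real n + 1)"
    using n by (intro mult_mono) linarith+
  then have growth: "2 * \<bar>w\<bar> \<le> \<bar>real n + \<mu> + 1\<bar> * (real n + 1)" by simp
  have "norm (bessel_coeff \<mu> (Suc n) * w ^ Suc n) = \<bar>bessel_coeff \<mu> (Suc n)\<bar> * \<bar>w\<bar> * \<bar>w\<bar> ^ n"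
    by (simp add: abs_mult power_abs)
  also have "\<dots> \<le> \<bar>bessel_coeff \<mu> (Suc n)\<bar> * (\<bar>real n + \<mu> + 1\<bar> * (real n + 1) / 2) * \<bar>w\<bar> ^ n"
    using growth by (intro mult_right_mono mult_left_mono) auto
  also have "\<dots> = 1/2 * norm (bessel_coeff \<mu> n * w ^ n)"
  proof -
    have "\<bar>- (real n + \<mu> + 1)\<bar> = \<bar>real n + \<mu> + 1\<bar>" by (rule abs_minus_cancel)
    then show ?thesis
      by (subst (2) bessel_coeff_Suc) (simp only: abs_mult power_abs norm_mult real_norm_def, simp)
  qed
  finally show "norm (bessel_coeff \<mu> (Suc n) * w ^ Suc n) \<le> 1/2 * norm (bessel_coeff \<mu> n * w ^ n)" .
qed simp

lemma bessel_series_sums: "(\<lambda>k. bessel_coeff \<mu> k * w ^ k) sums bessel_series \<mu> w"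
  unfolding bessel_series_def by (rule summable_sums[OF summable_bessel_series])

lemma diffs_bessel_coeff: "diffs (bessel_coeff \<mu>) = (\<lambda>k. - bessel_coeff (\<mu> + 1) k)"
proof
  fix k
  show "diffs (bessel_coeff \<mu>) k = - bessel_coeff (\<mu> + 1) k"
    unfolding diffs_def bessel_coeff_def
    by (simp add: field_simps add_ac del: fact_Suc) (simp add: algebra_simps)
qed

lemma bessel_series_deriv:
  "(bessel_series \<mu> has_real_derivative - bessel_series (\<mu> + 1) w) (at w)"
proof -
  have "((\<lambda>w. \<Sum>k. bessel_coeff \<mu> k * w ^ k) has_real_derivative
          (\<Sum>k. diffs (bessel_coeff \<mu>) k * w ^ k)) (at w)"
    by (rule termdiffs_strong_converges_everywhere) (rule summable_bessel_series)
  also have "(\<Sum>k. diffs (bessel_coeff \<mu>) k * w ^ k) = - bessel_series (\<mu> + 1) w"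
    unfolding diffs_bessel_coeff bessel_series_def
    using summable_bessel_series by (simp add: suminf_minus[symmetric])
  finally show ?thesis unfolding bessel_series_def[abs_def] .
qed

lemma bessel_series_recurrence:
  "bessel_series (\<mu> - 1) w + w * bessel_series (\<mu> + 1) w = \<mu> * bessel_series \<mu> w"
proof -
  define shifted where "shifted k = (if k = 0 then 0 else bessel_coeff (\<mu> + 1) (k - 1) * w ^ k)" for k
  have "(\<lambda>k. shifted (Suc k)) sums (w * bessel_series (\<mu> + 1) w)"
    using sums_mult[OF bessel_series_sums[of "\<mu> + 1" w], of w] by (simp add: shifted_def mult_ac)
  then have "shifted sums (w * bessel_series (\<mu> + 1) w)"
    by (subst (asm) sums_Suc_iff) (simp add: shifted_def)
  then have "(\<lambda>k. bessel_coeff (\<mu> - 1) k * w ^ k + shifted k)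
               sums (bessel_series (\<mu> - 1) w + w * bessel_series (\<mu> + 1) w)"
    by (rule sums_add[OF bessel_series_sums])
  moreover have "bessel_coeff (\<mu> - 1) k * w ^ k + shifted k = \<mu> * (bessel_coeff \<mu> k * w ^ k)" for k
  proof (cases k)
    case 0
    then show ?thesis
      using rGamma_plus1[of \<mu>] by (simp add: shifted_def bessel_coeff_def)
  next
    case (Suc j)
    have "rGamma (real j + \<mu> + 1) = (real j + \<mu> + 1) * rGamma (real j + \<mu> + 2)"
      using rGamma_plus1[of "real j + \<mu> + 1"] by (simp add: add_ac)
    then have "rGamma (real (Suc j) + (\<mu> - 1) + 1) = (real j + \<mu> + 1) * rGamma (real j + \<mu> + 2)"
      by (simp add: add_ac)
    moreover have "rGamma (real j + (\<mu> + 1) + 1) = rGamma (real j + \<mu> + 2)"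
      and "rGamma (real (Suc j) + \<mu> + 1) = rGamma (real j + \<mu> + 2)"
      by (simp_all add: add_ac)
    moreover have "fact (Suc j) = (real j + 1) * (fact j :: real)"
      by (simp add: algebra_simps)
    ultimately show ?thesis
      using Suc unfolding shifted_def bessel_coeff_def
      by (simp only: power_Suc diff_Suc_1 if_False nat.simps)
         (simp add: divide_simps, simp add: algebra_simps)
  qed
  ultimately have "(\<lambda>k. \<mu> * (bessel_coeff \<mu> k * w ^ k))
                     sums (bessel_series (\<mu> - 1) w + w * bessel_series (\<mu> + 1) w)"
    by simp
  then show ?thesis
    using sums_mult[OF bessel_series_sums[of \<mu> w], of \<mu>] sums_unique2 by blast
qed

lemma Jreal_recurrence:
  assumes "t > 0"
  shows "Jreal (\<mu> - 1) t + Jreal (\<mu> + 1) t = 2 * \<mu> / t * Jreal \<mu> t"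
proof -
  have "Jreal (\<mu> - 1) t + Jreal (\<mu> + 1) t
      = (bessel_series (\<mu> - 1) ((t/2)\<^sup>2) + (t/2)\<^sup>2 * bessel_series (\<mu> + 1) ((t/2)\<^sup>2)) * (t/2) powr \<mu> / (t/2)"
    using assms unfolding Jreal_def by (simp add: powr_add powr_diff field_simps power2_eq_square)
  also have "\<dots> = 2 * \<mu> / t * Jreal \<mu> t"
    unfolding bessel_series_recurrence Jreal_def using assms by (simp add: field_simps)
  finally show ?thesis .
qed

lemma Jreal_deriv_up:
  assumes "t > 0"
  shows "(Jreal \<mu> has_real_derivative \<mu> / t * Jreal \<mu> t - Jreal (\<mu> + 1) t) (at t)"
proof -
  have "((\<lambda>t. bessel_series \<mu> ((t/2)\<^sup>2)) has_real_derivative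
          - bessel_series (\<mu> + 1) ((t/2)\<^sup>2) * (t/2)) (at t)"
    by (rule DERIV_chain2[OF bessel_series_deriv]) (auto intro!: derivative_eq_intros)
  moreover have "((\<lambda>t. (t/2) powr \<mu>) has_real_derivative \<mu> * (t/2) powr (\<mu> - 1) * (1/2)) (at t)"
    using assms by (auto intro!: derivative_eq_intros)
  ultimately have "(Jreal \<mu> has_real_derivative
      - bessel_series (\<mu> + 1) ((t/2)\<^sup>2) * (t/2) * (t/2) powr \<mu>
      + \<mu> * (t/2) powr (\<mu> - 1) * (1/2) * bessel_series \<mu> ((t/2)\<^sup>2)) (at t)"
    unfolding Jreal_def[abs_def] by (rule DERIV_mult)
  moreover have "- bessel_series (\<mu> + 1) ((t/2)\<^sup>2) * (t/2) * (t/2) powr \<mu>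
      + \<mu> * (t/2) powr (\<mu> - 1) * (1/2) * bessel_series \<mu> ((t/2)\<^sup>2)
      = \<mu> / t * Jreal \<mu> t - Jreal (\<mu> + 1) t"
    using assms unfolding Jreal_def by (simp add: powr_add powr_diff field_simps power2_eq_square)
  ultimately show ?thesis by simp
qed

lemma Jreal_deriv_down:
  assumes "t > 0"
  shows "(Jreal \<mu> has_real_derivative Jreal (\<mu> - 1) t - \<mu> / t * Jreal \<mu> t) (at t)"
proof -
  have "Jreal (\<mu> - 1) t - \<mu> / t * Jreal \<mu> t = \<mu> / t * Jreal \<mu> t - Jreal (\<mu> + 1) t"
    using Jreal_recurrence[OF assms, of \<mu>] by (simp add: field_simps)
  then show ?thesis using Jreal_deriv_up[OF assms, of \<mu>] by simp
qed

section \<open>Decay of the Bessel function\<close>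

text \<open>With \<open>c = \<mu>\<^sup>2 - 1/4\<close>, the function \<open>u = sqrt t * J\<^sub>\<mu>(t)\<close> solves \<open>u'' + (1 - c/t\<^sup>2) u = 0\<close>
  and \<open>u' = sqrt t * (J\<^sub>\<mu>\<^sub>-\<^sub>1(t) + (1/2 - \<mu>) J\<^sub>\<mu>(t) / t)\<close>; the energy is
  \<open>u'\<^sup>2 + (1 - c/t\<^sup>2) u\<^sup>2\<close>.\<close>
definition bessel_energy :: "real \<Rightarrow> real \<Rightarrow> real" where
  "bessel_energy \<mu> t = t * (Jreal (\<mu> - 1) t + (1/2 - \<mu>) * Jreal \<mu> t / t)\<^sup>2
                        + (t - (\<mu>\<^sup>2 - 1/4) / t) * (Jreal \<mu> t)\<^sup>2"

lemma bessel_energy_deriv: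
  assumes "t > 0"
  shows "(bessel_energy \<mu> has_real_derivative 2 * (\<mu>\<^sup>2 - 1/4) * (Jreal \<mu> t)\<^sup>2 / t\<^sup>2) (at t)"
proof -
  note DJ = Jreal_deriv_down[OF assms, of \<mu>]
  note DJ' = Jreal_deriv_up[OF assms, of "\<mu> - 1"]
  show ?thesis
    unfolding bessel_energy_def[abs_def]
    apply (rule derivative_eq_intros DJ DJ' | use assms in force)+
    using assms by (simp add: field_simps power2_eq_square)
qed

lemma bessel_energy_ge:
  assumes "t \<ge> 1 + 2 * \<bar>\<mu>\<^sup>2 - 1/4\<bar>"
  shows "t * (Jreal \<mu> t)\<^sup>2 / 2 \<le> bessel_energy \<mu> t"
proof -
  define c where "c = \<mu>\<^sup>2 - 1/4"
  have t1: "t \<ge> 1" and "2 * c \<le> t"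
    using assms unfolding c_def[symmetric] by linarith+
  moreover have "t * 1 \<le> t * t" using t1 by (intro mult_left_mono) auto
  ultimately have "2 * c \<le> t * t" by linarith
  then have "c / t \<le> t / 2" using t1 by (simp add: divide_le_eq)
  then have "(\<mu>\<^sup>2 - 1/4) / t \<le> t / 2" unfolding c_def .
  then have "t / 2 * (Jreal \<mu> t)\<^sup>2 \<le> (t - (\<mu>\<^sup>2 - 1/4) / t) * (Jreal \<mu> t)\<^sup>2"
    by (intro mult_right_mono) auto
  moreover have "0 \<le> t * (Jreal (\<mu> - 1) t + (1/2 - \<mu>) * Jreal \<mu> t / t)\<^sup>2"
    using t1 by simp
  ultimately show ?thesis unfolding bessel_energy_def by simp
qed

text \<open>Since \<open>E' \<le> 2 \<bar>c\<bar> J\<^sub>\<mu>\<^sup>2 / t\<^sup>2 \<le> 4 \<bar>c\<bar> E / t\<^sup>3\<close>, the function \<open>E exp(2 \<bar>c\<bar> / t\<^sup>2)\<close> is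
  decreasing.\<close>
lemma bessel_energy_bounded:
  fixes \<mu> t :: real
  defines "T \<equiv> 1 + 2 * \<bar>\<mu>\<^sup>2 - 1/4\<bar>"
  assumes t: "t \<ge> T"
  shows "bessel_energy \<mu> t \<le> bessel_energy \<mu> T * exp (2 * \<bar>\<mu>\<^sup>2 - 1/4\<bar> / T\<^sup>2)"
proof -
  define c where "c = \<mu>\<^sup>2 - 1/4"
  define K where "K = \<bar>c\<bar>"
  define G where "G s = bessel_energy \<mu> s * exp (2 * K / s\<^sup>2)" for s
  have T1: "T \<ge> 1" unfolding T_def by simp
  define G' where "G' s = 2 * c * (Jreal \<mu> s)\<^sup>2 / s\<^sup>2 * exp (2 * K / s\<^sup>2)
                          - bessel_energy \<mu> s * (4 * K / s ^ 3) * exp (2 * K / s\<^sup>2)" for s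
  have DG: "(G has_real_derivative G' s) (at s)" if "s > 0" for s
    unfolding G_def[abs_def] G'_def c_def
    apply (rule derivative_eq_intros bessel_energy_deriv[OF that] | use that in force)+
    using that by (simp add: field_simps power2_eq_square power3_eq_cube power4_eq_xxxx)
  have G'_nonpos: "G' s \<le> 0" if "s \<ge> T" for s
  proof -
    have s0: "s > 0" using that T1 by simp
    have "2 * c * (Jreal \<mu> s)\<^sup>2 / s\<^sup>2 \<le> 2 * K * (Jreal \<mu> s)\<^sup>2 / s\<^sup>2"
      unfolding K_def by (intro divide_right_mono mult_right_mono) auto
    also have "\<dots> = 2 * K * (s * (Jreal \<mu> s)\<^sup>2) / s ^ 3"
      using s0 by (simp add: field_simps power2_eq_square power3_eq_cube)
    also have "\<dots> \<le> 2 * K * (2 * bessel_energy \<mu> s) / s ^ 3"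
      using bessel_energy_ge[of \<mu> s] that s0 unfolding K_def c_def T_def
      by (intro divide_right_mono mult_left_mono) auto
    finally have "2 * c * (Jreal \<mu> s)\<^sup>2 / s\<^sup>2 \<le> bessel_energy \<mu> s * (4 * K / s ^ 3)"
      by (simp add: mult_ac)
    then have "2 * c * (Jreal \<mu> s)\<^sup>2 / s\<^sup>2 * exp (2 * K / s\<^sup>2)
               \<le> bessel_energy \<mu> s * (4 * K / s ^ 3) * exp (2 * K / s\<^sup>2)"
      by (rule mult_right_mono) simp
    then show ?thesis unfolding G'_def by linarith
  qed
  have "G t \<le> G T"
  proof (rule DERIV_nonpos_imp_decreasing_open[OF t])
    show "\<exists>y. (G has_real_derivative y) (at s) \<and> y \<le> 0" if "T < s" "s < t" for s
      using DG[of s] G'_nonpos[of s] that T1 by auto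
    have "isCont G s" if "s \<in> {T..t}" for s
      using DG[of s] that T1 DERIV_isCont by auto
    then show "continuous_on {T..t} G" by (intro continuous_at_imp_continuous_on) auto
  qed
  moreover have "bessel_energy \<mu> t \<le> G t"
  proof -
    have "0 \<le> bessel_energy \<mu> t"
      using bessel_energy_ge[of \<mu> t] t T1 unfolding T_def
      by (smt (verit) divide_nonneg_nonneg mult_nonneg_nonneg zero_le_power2)
    moreover have "1 \<le> exp (2 * K / t\<^sup>2)" unfolding K_def by simp
    ultimately show ?thesis
      unfolding G_def using mult_left_mono by fastforce
  qed
  ultimately show ?thesis unfolding G_def K_def c_def by simp
qed

lemma Jreal_decay: "\<exists>C T. T > 0 \<and> (\<forall>t\<ge>T. \<bar>Jreal \<mu> t\<bar> \<le> C / sqrt t)"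
proof -
  define T where "T = 1 + 2 * \<bar>\<mu>\<^sup>2 - 1/4\<bar>"
  have T1: "T \<ge> 1" unfolding T_def by simp
  define B where "B = bessel_energy \<mu> T * exp (2 * \<bar>\<mu>\<^sup>2 - 1/4\<bar> / T\<^sup>2)"
  have "\<bar>Jreal \<mu> t\<bar> \<le> sqrt (2 * B) / sqrt t" if "t \<ge> T" for t
  proof -
    have t0: "t > 0" using that T1 by simp
    have "t * (Jreal \<mu> t)\<^sup>2 / 2 \<le> B"
      using order_trans[OF bessel_energy_ge bessel_energy_bounded] that
      unfolding T_def B_def by blast
    then have "(Jreal \<mu> t)\<^sup>2 \<le> 2 * B / t" using t0 by (simp add: field_simps)
    then have "sqrt ((Jreal \<mu> t)\<^sup>2) \<le> sqrt (2 * B / t)" by (rule real_sqrt_le_mono)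
    then show ?thesis by (simp add: real_sqrt_divide)
  qed
  moreover have "T > 0" using T1 by simp
  ultimately show ?thesis by blast
qed

section \<open>The principal branch on the real axis\<close>

definition sign_phase :: "real \<Rightarrow> real \<Rightarrow> complex" where
  "sign_phase s \<mu> = (if s < 0 then exp (\<i> * pi * \<mu>) else 1)"

lemma sign_phase_nonzero: "sign_phase s \<mu> \<noteq> 0"
  by (simp add: sign_phase_def)

lemma sign_phase_mult_pos: "c > 0 \<Longrightarrow> sign_phase (c * s) \<mu> = sign_phase s \<mu>"
  by (simp add: sign_phase_def mult_less_0_iff)

lemma sign_phase_add_nat:
  "sign_phase s (\<mu> + real k) = (if s < 0 then (-1) ^ k else 1) * sign_phase s \<mu>"
proof -
  have "exp (\<i> * pi * complex_of_real (\<mu> + real k)) = exp (of_nat k * (\<i> * pi)) * exp (\<i> * pi * \<mu>)"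
    by (simp add: exp_add[symmetric] algebra_simps)
  then show ?thesis
    by (simp add: sign_phase_def exp_of_nat_mult)
qed

lemma of_real_powr_sign_phase:
  "t \<noteq> 0 \<Longrightarrow> complex_of_real t powr complex_of_real \<mu> = sign_phase t \<mu> * complex_of_real (\<bar>t\<bar> powr \<mu>)"
  by (auto simp: sign_phase_def powr_of_real_if)

lemma BesselJ_of_real:
  assumes "t \<noteq> 0"
  shows "BesselJ (complex_of_real \<mu>) (complex_of_real t) = sign_phase t \<mu> * complex_of_real (Jreal \<mu> \<bar>t\<bar>)"
proof -
  define w where "w = (\<bar>t\<bar> / 2)\<^sup>2"
  define Z where "Z = (complex_of_real t / 2) powr complex_of_real \<mu>"
  have Z: "Z = sign_phase t \<mu> * complex_of_real ((\<bar>t\<bar> / 2) powr \<mu>)"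
    using of_real_powr_sign_phase[of "t / 2" \<mu>] assms
    by (simp add: Z_def sign_phase_def)
  have "(-1) ^ k * rGamma (of_nat k + complex_of_real \<mu> + 1) / fact k * (complex_of_real t / 2) ^ (2 * k)
        = complex_of_real (bessel_coeff \<mu> k * w ^ k)" for k
  proof -
    have "rGamma (of_nat k + complex_of_real \<mu> + 1) = complex_of_real (rGamma (real k + \<mu> + 1))"
      by (subst rGamma_complex_of_real[symmetric]) simp
    moreover have "(complex_of_real t / 2) ^ (2 * k) = complex_of_real (w ^ k)"
      unfolding w_def by (simp add: power_mult power2_abs power_divide)
    ultimately show ?thesis by (simp add: bessel_coeff_def)
  qed
  then have "BesselJ (complex_of_real \<mu>) (complex_of_real t) = (\<Sum>k. complex_of_real (bessel_coeff \<mu> k * w ^ k) * Z)"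
    unfolding BesselJ_def Z_def by simp
  also have "\<dots> = complex_of_real (bessel_series \<mu> w) * Z"
    using bessel_series_sums[of \<mu> w]
    by (intro sums_unique[symmetric] sums_mult2) (simp only: sums_of_real_iff)
  finally show ?thesis unfolding Z Jreal_def w_def by simp
qed

text \<open>For \<open>h > 0\<close> the recursion of \<open>sigma\<close> (with \<open>g = h\<close>) expands to
  \<open>h\<^sup>\<mu> (r / (h\<^sup>\<mu> h'))' = r'/h' - \<mu> r/h - r h''/h'\<^sup>2\<close>, \<open>\<mu> = \<nu> + k + 1\<close>, which is real.\<close>
fun sigma_real :: "real \<Rightarrow> (real \<Rightarrow> real) \<Rightarrow> (real \<Rightarrow> real) \<Rightarrow> nat \<Rightarrow> real \<Rightarrow> real" where
  "sigma_real \<nu> f h 0 = f"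
| "sigma_real \<nu> f h (Suc k) = (\<lambda>x. deriv (sigma_real \<nu> f h k) x / deriv h x
      - (\<nu> + real (Suc k)) * sigma_real \<nu> f h k x / h x
      - sigma_real \<nu> f h k x * deriv (deriv h) x / (deriv h x)\<^sup>2)"

lemma smooth_on_sigma_real:
  assumes "open U" "smooth_on U f" "smooth_on U h" "\<forall>x\<in>U. h x \<noteq> 0" "\<forall>x\<in>U. deriv h x \<noteq> 0"
  shows "smooth_on U (sigma_real \<nu> f h k)"
proof (induction k)
  case (Suc k)
  have "smooth_on U (deriv h)" "smooth_on U (deriv (deriv h))"
    using assms(3) smooth_on_deriv by blast+
  with Suc assms show ?case
    unfolding sigma_real.simps power2_eq_square
    by (intro smooth_on_diff smooth_on_divide smooth_on_mult smooth_on_deriv smooth_on_const) auto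
qed (use assms in simp)

lemma DERIV_quotient_powr:
  fixes r h :: "real \<Rightarrow> real"
  assumes "r differentiable (at x)" "h differentiable (at x)" "deriv h differentiable (at x)"
    and "h x > 0" "deriv h x \<noteq> 0"
  shows "((\<lambda>y. r y / (h y powr \<mu> * deriv h y)) has_real_derivative
           (deriv r x / deriv h x - \<mu> * r x / h x - r x * deriv (deriv h) x / (deriv h x)\<^sup>2)
           / h x powr \<mu>) (at x)"
proof -
  have dr: "(r has_real_derivative deriv r x) (at x)"
    and dh: "(h has_real_derivative deriv h x) (at x)"
    and dh': "(deriv h has_real_derivative deriv (deriv h) x) (at x)"
    using assms(1-3) by (simp_all add: DERIV_deriv_iff_real_differentiable)
  have "((\<lambda>y. h y powr \<mu>) has_real_derivative \<mu> * h x powr (\<mu> - 1) * deriv h x) (at x)"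
    using DERIV_fun_powr[OF dh assms(4), of \<mu>] by simp
  from DERIV_mult[OF this dh'] have "((\<lambda>y. h y powr \<mu> * deriv h y) has_real_derivative
      \<mu> * h x powr (\<mu> - 1) * deriv h x * deriv h x + deriv (deriv h) x * h x powr \<mu>) (at x)" .
  from DERIV_quotient[OF dr this] have "((\<lambda>y. r y / (h y powr \<mu> * deriv h y)) has_real_derivative
      (deriv r x * (h x powr \<mu> * deriv h x)
        - (\<mu> * h x powr (\<mu> - 1) * deriv h x * deriv h x + deriv (deriv h) x * h x powr \<mu>) * r x)
      / (h x powr \<mu> * deriv h x)\<^sup>2) (at x)"
    using assms(4,5) by (simp add: power2_eq_square)
  moreover have "(deriv r x * (h x powr \<mu> * deriv h x)
        - (\<mu> * h x powr (\<mu> - 1) * deriv h x * deriv h x + deriv (deriv h) x * h x powr \<mu>) * r x)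
      / (h x powr \<mu> * deriv h x)\<^sup>2
    = (deriv r x / deriv h x - \<mu> * r x / h x - r x * deriv (deriv h) x / (deriv h x)\<^sup>2) / h x powr \<mu>"
  proof -
    have "h x powr (\<mu> - 1) = h x powr \<mu> / h x" "h x powr \<mu> > 0"
      using assms(4) by (simp_all add: powr_diff)
    then show ?thesis using assms(4,5) by (simp add: field_simps power2_eq_square)
  qed
  ultimately show ?thesis by (rule DERIV_cong)
qed

lemma sigma_eq_sigma_real:
  assumes U: "open U" and s: "s = 1 \<or> s = -1" and g: "g = (\<lambda>x. s * h x)"
    and h_pos: "\<forall>x\<in>U. h x > 0" and h'_nz: "\<forall>x\<in>U. deriv h x \<noteq> 0"
    and f: "smooth_on U f" and h: "smooth_on U h"
  shows "x \<in> U \<Longrightarrow> sigma \<nu> f g k x = complex_of_real (s ^ k * sigma_real \<nu> f h k x)"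
proof (induction k arbitrary: x)
  case (Suc k)
  define \<mu> where "\<mu> = \<nu> + real (Suc k)"
  define q where "q y = sigma_real \<nu> f h k y / (h y powr \<mu> * deriv h y)" for y
  have gpow: "gpow g \<mu> y = sign_phase s \<mu> * complex_of_real (h y powr \<mu>)" if "y \<in> U" for y
    using of_real_powr_sign_phase[of "s * h y" \<mu>] sign_phase_mult_pos[of "h y" s \<mu>] h_pos that s
    by (auto simp: gpow_def g abs_mult mult.commute)
  have deriv_g: "deriv g y = s * deriv h y" if "y \<in> U" for y
    unfolding g using DERIV_deriv_smooth_on[OF h that] by (intro DERIV_imp_deriv DERIV_cmult)
  have quotient_eq: "sigma \<nu> f g k y / (gpow g \<mu> y * complex_of_real (deriv g y))
        = complex_of_real (s ^ Suc k * q y) / sign_phase s \<mu>" if "y \<in> U" for y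
    using s sign_phase_nonzero[of s \<mu>]
    by (auto simp: Suc.IH[OF that] gpow[OF that] deriv_g[OF that] q_def field_simps)
  have DQ: "((\<lambda>y. complex_of_real (s ^ Suc k * q y) / sign_phase s \<mu>) has_vector_derivative
      complex_of_real (s ^ Suc k * (sigma_real \<nu> f h (Suc k) x / h x powr \<mu>)) / sign_phase s \<mu>) (at x)"
  proof -
    have "smooth_on U (sigma_real \<nu> f h k)" "smooth_on U (deriv h)"
      using smooth_on_sigma_real[OF U f h] smooth_on_deriv[OF h] h_pos h'_nz by force+
    then have "(q has_real_derivative sigma_real \<nu> f h (Suc k) x / h x powr \<mu>) (at x)"
      unfolding q_def using Suc.prems h_pos h'_nz
      by (auto intro!: DERIV_quotient_powr differentiable_smooth_on[OF h] differentiable_smooth_on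
               simp: \<mu>_def)
    then show ?thesis
      by (intro has_vector_derivative_divide has_vector_derivative_of_real DERIV_cmult)
  qed
  have "((\<lambda>y. sigma \<nu> f g k y / (gpow g \<mu> y * complex_of_real (deriv g y))) has_vector_derivative
      complex_of_real (s ^ Suc k * (sigma_real \<nu> f h (Suc k) x / h x powr \<mu>)) / sign_phase s \<mu>) (at x)"
    by (rule has_vector_derivative_transform_within_open[OF DQ U Suc.prems]) (simp add: quotient_eq)
  then have "sigma \<nu> f g (Suc k) x = gpow g \<mu> x
      * (complex_of_real (s ^ Suc k * (sigma_real \<nu> f h (Suc k) x / h x powr \<mu>)) / sign_phase s \<mu>)"
    unfolding sigma.simps \<mu>_def[symmetric] by (simp add: vector_derivative_at)
  also have "\<dots> = complex_of_real (s ^ Suc k * sigma_real \<nu> f h (Suc k) x)"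
    using gpow[OF Suc.prems] sign_phase_nonzero[of s \<mu>] h_pos[rule_format, OF Suc.prems]
    by (simp add: field_simps del: sigma_real.simps)
  finally show ?case .
qed simp

lemma constant_sign_neighbourhood:
  assumes "a < b" and g: "smooth_fun g"
    and g_nz: "\<forall>x\<in>{a..b}. g x \<noteq> 0" and g'_nz: "\<forall>x\<in>{a..b}. deriv g x \<noteq> 0"
  obtains s U where "s = 1 \<or> s = -1" "open U" "{a..b} \<subseteq> U" "\<forall>x\<in>U. s * g x > 0" "\<forall>x\<in>U. deriv g x \<noteq> 0"
proof -
  define s :: real where "s = (if g a > 0 then 1 else -1)"
  have s: "s = 1 \<or> s = -1" unfolding s_def by simp
  have cont: "continuous_on UNIV (\<lambda>x. s * g x)" "continuous_on UNIV (deriv g)"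
    using g unfolding smooth_fun_def
    by (metis continuous_on_mult_left differentiable_imp_continuous_on differentiable_on_def funpow_0
        funpow_Suc_right o_apply)+
  have pos: "s * g x > 0" if x: "x \<in> {a..b}" for x
  proof (rule ccontr)
    assume "\<not> s * g x > 0"
    moreover have "s * g a > 0" using g_nz[rule_format, of a] \<open>a < b\<close> by (auto simp: s_def)
    moreover have "continuous_on {a..x} (\<lambda>x. s * g x)" using cont(1) by (rule continuous_on_subset) simp
    ultimately obtain z where "a \<le> z" "z \<le> x" "s * g z = 0"
      using IVT2'[of "\<lambda>x. s * g x" x 0 a] x by auto
    then show False using g_nz s x by auto
  qed
  define U where "U = {x. 0 < s * g x} \<inter> {x. deriv g x \<noteq> 0}"
  have "open U"
    unfolding U_def by (intro open_Int open_Collect_less open_Collect_neq cont continuous_on_const)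
  moreover have "{a..b} \<subseteq> U" using pos g'_nz unfolding U_def by auto
  ultimately show ?thesis using that s unfolding U_def by blast
qed

section \<open>Integration by parts\<close>

text \<open>For \<open>g = h > 0\<close>, \<open>moment 0\<close> is \<open>\<H>\<^sub>\<nu>[f]\<close> and \<open>boundary_term (k - 1)\<close> is the \<open>k\<close>-th
  bracket of \<open>Q\<^sub>m\<^sup>A[f]\<close>, with \<open>\<sigma>\<^sub>k\<close> replaced by \<open>sigma_real\<close>.\<close>
locale bessel_moments =
  fixes \<nu> a b :: real and f h :: "real \<Rightarrow> real" and U :: "real set"
  assumes a_less_b: "a < b" and open_U: "open U" and interval_subset: "{a..b} \<subseteq> U"
    and h_pos: "\<forall>x\<in>U. h x > 0" and deriv_h_nonzero: "\<forall>x\<in>U. deriv h x \<noteq> 0"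
    and smooth_f: "smooth_on U f" and smooth_h: "smooth_on U h"
begin

definition moment :: "nat \<Rightarrow> real \<Rightarrow> real" where
  "moment j \<omega> = integral {a..b} (\<lambda>x. sigma_real \<nu> f h j x * Jreal (\<nu> + real j) (\<omega> * h x))"

definition boundary_term :: "nat \<Rightarrow> real \<Rightarrow> real" where
  "boundary_term j \<omega> = sigma_real \<nu> f h j b / deriv h b * Jreal (\<nu> + real (Suc j)) (\<omega> * h b)
                       - sigma_real \<nu> f h j a / deriv h a * Jreal (\<nu> + real (Suc j)) (\<omega> * h a)"

lemma smooth_on_sigma: "smooth_on U (sigma_real \<nu> f h k)"
  using smooth_on_sigma_real[OF open_U smooth_f smooth_h] h_pos deriv_h_nonzero by force

lemma DERIV_Jreal_comp:
  assumes "x \<in> U" "\<omega> > 0"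
  shows "((\<lambda>x. Jreal \<mu> (\<omega> * h x)) has_real_derivative
           (Jreal (\<mu> - 1) (\<omega> * h x) - \<mu> / (\<omega> * h x) * Jreal \<mu> (\<omega> * h x)) * (\<omega> * deriv h x)) (at x)"
proof -
  have "\<omega> * h x > 0" using assms h_pos by simp
  from DERIV_chain2[OF Jreal_deriv_down[OF this] DERIV_cmult[OF DERIV_deriv_smooth_on[OF smooth_h assms(1)]]]
  show ?thesis .
qed

lemma continuous_on_moment_integrand:
  assumes "\<omega> > 0"
  shows "continuous_on {a..b} (\<lambda>x. sigma_real \<nu> f h j x * Jreal \<mu> (\<omega> * h x))"
proof -
  have "continuous_on U (\<lambda>x. Jreal \<mu> (\<omega> * h x))"
    using DERIV_Jreal_comp[OF _ assms] DERIV_isCont by (blast intro: continuous_at_imp_continuous_on)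
  then show ?thesis
    using smooth_on_imp_continuous_on[OF smooth_on_sigma]
    by (intro continuous_on_mult continuous_on_subset[OF _ interval_subset])
qed

lemma DERIV_boundary_integrand:
  assumes x: "x \<in> U" and \<omega>: "\<omega> > 0"
  shows "((\<lambda>x. sigma_real \<nu> f h j x / deriv h x * Jreal (\<nu> + real (Suc j)) (\<omega> * h x)) has_real_derivative
           sigma_real \<nu> f h (Suc j) x * Jreal (\<nu> + real (Suc j)) (\<omega> * h x)
           + \<omega> * (sigma_real \<nu> f h j x * Jreal (\<nu> + real j) (\<omega> * h x))) (at x)"
proof -
  define \<mu> where "\<mu> = \<nu> + real (Suc j)"
  have hx: "h x > 0" and h'x: "deriv h x \<noteq> 0" using h_pos deriv_h_nonzero x by auto
  have "((\<lambda>x. sigma_real \<nu> f h j x / deriv h x) has_real_derivative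
      (deriv (sigma_real \<nu> f h j) x * deriv h x - deriv (deriv h) x * sigma_real \<nu> f h j x)
      / (deriv h x * deriv h x)) (at x)"
    using DERIV_quotient[OF DERIV_deriv_smooth_on[OF smooth_on_sigma x]
        DERIV_deriv_smooth_on[OF smooth_on_deriv[OF smooth_h] x] h'x]
    by (simp add: power2_eq_square)
  from DERIV_mult[OF this DERIV_Jreal_comp[OF x \<omega>, of \<mu>]]
  have "((\<lambda>x. sigma_real \<nu> f h j x / deriv h x * Jreal \<mu> (\<omega> * h x)) has_real_derivative
      (deriv (sigma_real \<nu> f h j) x * deriv h x - deriv (deriv h) x * sigma_real \<nu> f h j x)
        / (deriv h x * deriv h x) * Jreal \<mu> (\<omega> * h x)
      + (Jreal (\<mu> - 1) (\<omega> * h x) - \<mu> / (\<omega> * h x) * Jreal \<mu> (\<omega> * h x)) * (\<omega> * deriv h x)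
        * (sigma_real \<nu> f h j x / deriv h x)) (at x)" .
  moreover have "(deriv (sigma_real \<nu> f h j) x * deriv h x - deriv (deriv h) x * sigma_real \<nu> f h j x)
        / (deriv h x * deriv h x) * Jreal \<mu> (\<omega> * h x)
      + (Jreal (\<mu> - 1) (\<omega> * h x) - \<mu> / (\<omega> * h x) * Jreal \<mu> (\<omega> * h x)) * (\<omega> * deriv h x)
        * (sigma_real \<nu> f h j x / deriv h x)
    = sigma_real \<nu> f h (Suc j) x * Jreal \<mu> (\<omega> * h x)
      + \<omega> * (sigma_real \<nu> f h j x * Jreal (\<mu> - 1) (\<omega> * h x))"
    using hx h'x \<omega> unfolding sigma_real.simps(2) \<mu>_def[symmetric]
    by (simp add: field_simps power2_eq_square)
  moreover have "\<mu> - 1 = \<nu> + real j" unfolding \<mu>_def by simp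
  ultimately show ?thesis
    unfolding \<mu>_def[symmetric] by simp
qed

lemma moment_by_parts:
  assumes "\<omega> > 0"
  shows "\<omega> * moment j \<omega> + moment (Suc j) \<omega> = boundary_term j \<omega>"
proof -
  define F where "F x = sigma_real \<nu> f h j x / deriv h x * Jreal (\<nu> + real (Suc j)) (\<omega> * h x)" for x
  define I\<^sub>0 where "I\<^sub>0 x = sigma_real \<nu> f h j x * Jreal (\<nu> + real j) (\<omega> * h x)" for x
  define I\<^sub>1 where "I\<^sub>1 x = sigma_real \<nu> f h (Suc j) x * Jreal (\<nu> + real (Suc j)) (\<omega> * h x)" for x
  have "((\<lambda>x. I\<^sub>1 x + \<omega> * I\<^sub>0 x) has_integral (F b - F a)) {a..b}"
  proof (rule fundamental_theorem_of_calculus)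
    fix x assume "x \<in> {a..b}"
    with interval_subset have "x \<in> U" by blast
    from DERIV_boundary_integrand[OF this assms, of j]
    show "(F has_vector_derivative I\<^sub>1 x + \<omega> * I\<^sub>0 x) (at x within {a..b})"
      unfolding F_def I\<^sub>0_def I\<^sub>1_def
      using has_real_derivative_iff_has_vector_derivative has_vector_derivative_at_within by blast
  qed (use a_less_b in simp)
  then have "integral {a..b} (\<lambda>x. I\<^sub>1 x + \<omega> * I\<^sub>0 x) = F b - F a"
    by (rule integral_unique)
  moreover have "I\<^sub>0 integrable_on {a..b}" "I\<^sub>1 integrable_on {a..b}"
    unfolding I\<^sub>0_def I\<^sub>1_def
    by (intro integrable_continuous_interval continuous_on_moment_integrand assms)+
  then have "integral {a..b} (\<lambda>x. I\<^sub>1 x + \<omega> * I\<^sub>0 x) = integral {a..b} I\<^sub>1 + \<omega> * integral {a..b} I\<^sub>0"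
    using integral_add[of I\<^sub>1 "{a..b}" "\<lambda>x. \<omega> * I\<^sub>0 x"] integrable_cmul[of I\<^sub>0 "{a..b}" \<omega>] by simp
  ultimately have "integral {a..b} I\<^sub>1 + \<omega> * integral {a..b} I\<^sub>0 = F b - F a"
    by simp
  then show ?thesis
    unfolding moment_def boundary_term_def F_def I\<^sub>0_def I\<^sub>1_def by simp
qed

lemma moment_expansion:
  assumes "\<omega> > 0"
  shows "moment 0 \<omega> = (\<Sum>k=1..n. (-1) ^ (k - 1) / \<omega> ^ k * boundary_term (k - 1) \<omega>)
                       + (-1) ^ n / \<omega> ^ n * moment n \<omega>"
proof (induction n)
  case (Suc n)
  have by_parts: "moment n \<omega> = (boundary_term n \<omega> - moment (Suc n) \<omega>) / \<omega>"
    using moment_by_parts[OF assms, of n] assms by (simp add: field_simps)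
  have "(-1) ^ n / \<omega> ^ n * moment n \<omega>
      = (-1) ^ n / \<omega> ^ Suc n * boundary_term n \<omega> + (-1) ^ Suc n / \<omega> ^ Suc n * moment (Suc n) \<omega>"
    unfolding by_parts using assms by (simp add: field_simps)
  then show ?case using Suc by simp
qed simp

lemma h_lower_bound: "\<exists>c>0. \<forall>x\<in>{a..b}. c \<le> h x"
proof -
  have "continuous_on {a..b} h"
    using smooth_on_imp_continuous_on[OF smooth_h] interval_subset by (rule continuous_on_subset)
  from continuous_attains_inf[OF compact_Icc _ this]
  obtain x\<^sub>0 where "x\<^sub>0 \<in> {a..b}" "\<forall>x\<in>{a..b}. h x\<^sub>0 \<le> h x"
    using a_less_b by auto
  moreover from this(1) have "h x\<^sub>0 > 0" using h_pos interval_subset by auto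
  ultimately show ?thesis by blast
qed

lemma Jreal_comp_decay: "\<exists>C. \<forall>\<^sub>F \<omega> in at_top. \<forall>x\<in>{a..b}. \<bar>Jreal \<mu> (\<omega> * h x)\<bar> \<le> C / sqrt \<omega>"
proof -
  obtain C T where T: "T > 0" and decay: "\<forall>t\<ge>T. \<bar>Jreal \<mu> t\<bar> \<le> C / sqrt t"
    using Jreal_decay by blast
  obtain c where c: "c > 0" "\<forall>x\<in>{a..b}. c \<le> h x"
    using h_lower_bound by blast
  have "0 \<le> C / sqrt T"
    using decay T by (meson abs_ge_zero order_trans order_refl)
  then have "C \<ge> 0"
    using T by (simp add: zero_le_divide_iff)
  have "\<forall>x\<in>{a..b}. \<bar>Jreal \<mu> (\<omega> * h x)\<bar> \<le> C / sqrt c / sqrt \<omega>" if \<omega>: "\<omega> \<ge> T / c" for \<omega>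
  proof
    fix x assume x: "x \<in> {a..b}"
    have "\<omega> > 0" using \<omega> T c divide_pos_pos[of T c] by linarith
    then have "\<omega> * c \<le> \<omega> * h x" using c x by simp
    moreover have "T \<le> \<omega> * c" using \<omega> c by (simp add: field_simps)
    ultimately have "\<bar>Jreal \<mu> (\<omega> * h x)\<bar> \<le> C / sqrt (\<omega> * h x)"
      using decay by simp
    also have "\<dots> \<le> C / sqrt (\<omega> * c)"
      using \<open>C \<ge> 0\<close> \<open>\<omega> > 0\<close> c \<open>\<omega> * c \<le> \<omega> * h x\<close>
      by (intro divide_left_mono) (auto intro: real_sqrt_le_mono)
    finally show "\<bar>Jreal \<mu> (\<omega> * h x)\<bar> \<le> C / sqrt c / sqrt \<omega>"
      by (simp add: real_sqrt_mult mult.commute)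
  qed
  then show ?thesis
    by (intro exI[of _ "C / sqrt c"] eventually_at_top_linorderI)
qed

lemma moment_bigo_sqrt: "moment j \<in> O[at_top](\<lambda>\<omega>. 1 / sqrt \<omega>)"
proof -
  obtain C where C: "\<forall>\<^sub>F \<omega> in at_top. \<forall>x\<in>{a..b}. \<bar>Jreal (\<nu> + real j) (\<omega> * h x)\<bar> \<le> C / sqrt \<omega>"
    using Jreal_comp_decay by blast
  obtain M where M: "M \<ge> 0" "\<And>x. x \<in> {a..b} \<Longrightarrow> norm (sigma_real \<nu> f h j x) \<le> M"
    using smooth_on_imp_continuous_on[OF smooth_on_sigma] interval_subset
    by (metis compact_Icc continuous_on_compact_bound continuous_on_subset)
  have "\<forall>\<^sub>F \<omega> in at_top. norm (moment j \<omega>) \<le> M * C * (b - a) * norm (1 / sqrt \<omega>)"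
    using C eventually_gt_at_top[of 0]
  proof eventually_elim
    case (elim \<omega>)
    have "norm (moment j \<omega>) \<le> M * (C / sqrt \<omega>) * (b - a)"
      unfolding moment_def
    proof (rule integral_bound)
      fix x assume "x \<in> {a..b}"
      then show "norm (sigma_real \<nu> f h j x * Jreal (\<nu> + real j) (\<omega> * h x)) \<le> M * (C / sqrt \<omega>)"
        using elim M unfolding norm_mult by (intro mult_mono) auto
    qed (use a_less_b continuous_on_moment_integrand elim in auto)
    then show ?case using elim by simp
  qed
  then show ?thesis by (rule bigoI)
qed

lemma boundary_term_bigo: "boundary_term j \<in> O[at_top](\<lambda>\<omega>. 1 / sqrt \<omega>)"
proof -
  define A where "A x = sigma_real \<nu> f h j x / deriv h x" for x
  obtain C where C: "\<forall>\<^sub>F \<omega> in at_top. \<forall>x\<in>{a..b}. \<bar>Jreal (\<nu> + real (Suc j)) (\<omega> * h x)\<bar> \<le> C / sqrt \<omega>"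
    using Jreal_comp_decay by blast
  have "\<forall>\<^sub>F \<omega> in at_top. norm (boundary_term j \<omega>) \<le> (\<bar>A b\<bar> + \<bar>A a\<bar>) * C * norm (1 / sqrt \<omega>)"
    using C eventually_gt_at_top[of 0]
  proof eventually_elim
    case (elim \<omega>)
    have "\<bar>boundary_term j \<omega>\<bar>
        \<le> \<bar>A b\<bar> * \<bar>Jreal (\<nu> + real (Suc j)) (\<omega> * h b)\<bar> + \<bar>A a\<bar> * \<bar>Jreal (\<nu> + real (Suc j)) (\<omega> * h a)\<bar>"
      unfolding boundary_term_def A_def abs_mult[symmetric] by (rule abs_triangle_ineq4)
    also have "\<dots> \<le> \<bar>A b\<bar> * (C / sqrt \<omega>) + \<bar>A a\<bar> * (C / sqrt \<omega>)"
      using elim a_less_b by (intro add_mono mult_left_mono) auto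
    finally show ?case using elim by (simp add: algebra_simps)
  qed
  then show ?thesis by (rule bigoI)
qed

lemma moment_bigo_three_halves: "moment j \<in> O[at_top](\<lambda>\<omega>. 1 / sqrt \<omega> / \<omega>)"
proof -
  have bigo: "(\<lambda>\<omega>. (boundary_term j \<omega> - moment (Suc j) \<omega>) / \<omega>) \<in> O[at_top](\<lambda>\<omega>. 1 / sqrt \<omega> / \<omega>)"
    using boundary_term_bigo moment_bigo_sqrt eventually_gt_at_top[of 0]
    by (intro landau_o.big.divide_right sum_in_bigo) (auto elim: eventually_mono)
  have "\<forall>\<^sub>F \<omega> in at_top. (boundary_term j \<omega> - moment (Suc j) \<omega>) / \<omega> = moment j \<omega>"
    using eventually_gt_at_top[of 0]
    by eventually_elim (use moment_by_parts in \<open>simp add: field_simps\<close>)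
  from landau_o.big.in_cong[OF this, THEN iffD1, OF bigo] show ?thesis .
qed

lemma inverse_power_sqrt_eq_powr:
  assumes "\<omega> > 0"
  shows "1 / sqrt \<omega> / \<omega> / \<omega> ^ m = \<omega> powr (- real m - 3/2)"
proof -
  have "\<omega> powr (- real m - 3/2) = 1 / \<omega> powr (real (Suc m) + 1/2)"
    by (simp add: powr_minus_divide[symmetric] algebra_simps)
  also have "\<omega> powr (real (Suc m) + 1/2) = \<omega> ^ Suc m * sqrt \<omega>"
    using assms by (simp only: powr_add powr_realpow powr_half_sqrt less_imp_le)
  finally show ?thesis by (simp add: field_simps)
qed

lemma remainder_bigo:
  "(\<lambda>\<omega>. moment 0 \<omega> - (\<Sum>k=1..m. (-1) ^ (k - 1) / \<omega> ^ k * boundary_term (k - 1) \<omega>))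
     \<in> O[at_top](\<lambda>\<omega>. \<omega> powr (- real m - 3/2))"
proof -
  have "\<forall>\<^sub>F \<omega> in at_top. (\<omega> :: real) ^ m \<noteq> 0"
    using eventually_gt_at_top[of 0] by eventually_elim simp
  from landau_o.big.divide_right[OF this moment_bigo_three_halves]
  have "(\<lambda>\<omega>. moment m \<omega> / \<omega> ^ m) \<in> O[at_top](\<lambda>\<omega>. 1 / sqrt \<omega> / \<omega> / \<omega> ^ m)" .
  moreover have "\<forall>\<^sub>F \<omega> in at_top. 1 / sqrt \<omega> / \<omega> / \<omega> ^ m = \<omega> powr (- real m - 3/2)"
    using eventually_gt_at_top[of 0] by eventually_elim (rule inverse_power_sqrt_eq_powr)
  ultimately have bigo: "(\<lambda>\<omega>. (-1) ^ m * (moment m \<omega> / \<omega> ^ m)) \<in> O[at_top](\<lambda>\<omega>. \<omega> powr (- real m - 3/2))"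
    by (subst landau_o.big.cmult_in_iff) (simp_all add: landau_o.big.cong)
  have "\<forall>\<^sub>F \<omega> in at_top. (-1) ^ m * (moment m \<omega> / \<omega> ^ m)
      = moment 0 \<omega> - (\<Sum>k=1..m. (-1) ^ (k - 1) / \<omega> ^ k * boundary_term (k - 1) \<omega>)"
    using eventually_gt_at_top[of 0] by eventually_elim (simp add: moment_expansion[of _ m])
  from landau_o.big.in_cong[OF this, THEN iffD1, OF bigo] show ?thesis .
qed

context
  fixes s :: real and g :: "real \<Rightarrow> real"
  assumes sign: "s = 1 \<or> s = -1" and g_eq: "g = (\<lambda>x. s * h x)"
begin

lemma BesselJ_comp:
  assumes "x \<in> U" "\<omega> > 0"
  shows "BesselJ (complex_of_real \<mu>) (complex_of_real (\<omega> * g x))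
         = sign_phase s \<mu> * complex_of_real (Jreal \<mu> (\<omega> * h x))"
proof -
  have "h x > 0" using h_pos assms by blast
  then have "\<omega> * g x \<noteq> 0" "sign_phase (\<omega> * g x) \<mu> = sign_phase s \<mu>" "\<bar>\<omega> * g x\<bar> = \<omega> * h x"
    using assms sign sign_phase_mult_pos[of "\<omega> * h x" s] by (auto simp: g_eq abs_mult mult_ac)
  then show ?thesis using BesselJ_of_real by metis
qed

lemma Hnu_eq_moment:
  assumes "\<omega> > 0"
  shows "Hnu \<nu> f g a b \<omega> = sign_phase s \<nu> * complex_of_real (moment 0 \<omega>)"
proof -
  have "Hnu \<nu> f g a b \<omega>
      = integral {a..b} (\<lambda>x. sign_phase s \<nu> * complex_of_real (f x * Jreal \<nu> (\<omega> * h x)))"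
    unfolding Hnu_def
  proof (rule integral_cong)
    fix x assume "x \<in> {a..b}"
    with interval_subset have "x \<in> U" by blast
    then show "complex_of_real (f x) * BesselJ (complex_of_real \<nu>) (complex_of_real (\<omega> * g x))
             = sign_phase s \<nu> * complex_of_real (f x * Jreal \<nu> (\<omega> * h x))"
      by (subst BesselJ_comp[OF _ assms]) (simp_all add: mult_ac)
  qed
  also have "\<dots> = sign_phase s \<nu> * complex_of_real (integral {a..b} (\<lambda>x. f x * Jreal \<nu> (\<omega> * h x)))"
    using continuous_on_moment_integrand[OF assms, of 0 \<nu>]
    by (intro integral_unique has_integral_mult_right has_integral_of_real integrable_integral
        integrable_continuous_interval) simp
  finally show ?thesis unfolding moment_def by simp
qed

lemma boundary_summand_eq:
  assumes "y \<in> U" "\<omega> > 0"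
  shows "sigma \<nu> f g j y / complex_of_real (deriv g y)
           * BesselJ (complex_of_real (\<nu> + real (Suc j))) (complex_of_real (\<omega> * g y))
         = sign_phase s \<nu>
           * complex_of_real (sigma_real \<nu> f h j y / deriv h y * Jreal (\<nu> + real (Suc j)) (\<omega> * h y))"
proof -
  have \<sigma>: "sigma \<nu> f g j y = complex_of_real (s ^ j * sigma_real \<nu> f h j y)"
    using sigma_eq_sigma_real[OF open_U sign g_eq h_pos deriv_h_nonzero smooth_f smooth_h assms(1)] .
  have g': "deriv g y = s * deriv h y"
    unfolding g_eq using DERIV_deriv_smooth_on[OF smooth_h assms(1)]
    by (intro DERIV_imp_deriv DERIV_cmult)
  have J: "BesselJ (complex_of_real (\<nu> + real (Suc j))) (complex_of_real (\<omega> * g y))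
      = complex_of_real (s ^ Suc j) * sign_phase s \<nu> * complex_of_real (Jreal (\<nu> + real (Suc j)) (\<omega> * h y))"
    unfolding BesselJ_comp[OF assms] sign_phase_add_nat using sign by auto
  have "complex_of_real s ^ j * complex_of_real s ^ j = 1"
    using sign by (auto simp flip: power_mult_distrib)
  moreover have "s \<noteq> 0" "deriv h y \<noteq> 0" using sign deriv_h_nonzero assms(1) by auto
  ultimately show ?thesis
    unfolding \<sigma> g' J by (simp add: field_simps)
qed

lemma QA_eq_boundary_terms:
  assumes "\<omega> > 0"
  shows "QA \<nu> f g a b m \<omega> = sign_phase s \<nu>
           * complex_of_real (\<Sum>k=1..m. (-1) ^ (k - 1) / \<omega> ^ k * boundary_term (k - 1) \<omega>)"
proof -
  have "a \<in> U" "b \<in> U" using interval_subset a_less_b by auto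
  have "1 / complex_of_real ((-\<omega>) ^ k) *
          (sigma \<nu> f g (k - 1) b / complex_of_real (deriv g b)
             * BesselJ (complex_of_real (\<nu> + real k)) (complex_of_real (\<omega> * g b))
           - sigma \<nu> f g (k - 1) a / complex_of_real (deriv g a)
             * BesselJ (complex_of_real (\<nu> + real k)) (complex_of_real (\<omega> * g a)))
        = - (sign_phase s \<nu> * complex_of_real ((-1) ^ (k - 1) / \<omega> ^ k * boundary_term (k - 1) \<omega>))"
    if "k \<in> {1..m}" for k
  proof -
    from that obtain j where k: "k = Suc j" by (cases k) auto
    have sign_power: "1 / (-\<omega>) ^ Suc j = - ((-1) ^ j / \<omega> ^ Suc j)"
      using assms by (simp add: power_minus' field_simps)
    have factor: "1 / complex_of_real ((-\<omega>) ^ Suc j)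
          * (sign_phase s \<nu> * complex_of_real X - sign_phase s \<nu> * complex_of_real Y)
        = sign_phase s \<nu> * complex_of_real (1 / (-\<omega>) ^ Suc j * (X - Y))" for X Y
      by (simp add: algebra_simps diff_divide_distrib)
    show ?thesis
      unfolding k diff_Suc_1 boundary_summand_eq[OF \<open>a \<in> U\<close> assms] boundary_summand_eq[OF \<open>b \<in> U\<close> assms]
      by (subst factor, subst sign_power) (simp add: boundary_term_def)
  qed
  then have "QA \<nu> f g a b m \<omega> = - (\<Sum>k=1..m.
      - (sign_phase s \<nu> * complex_of_real ((-1) ^ (k - 1) / \<omega> ^ k * boundary_term (k - 1) \<omega>)))"
    unfolding QA_def by (intro arg_cong[where f = uminus] sum.cong) auto
  then show ?thesis by (simp add: sum_distrib_left sum_negf)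
qed

end

end

lemma bessel_moments_sign_split:
  assumes "a < b" "smooth_fun f" "smooth_fun g"
    and "\<forall>x\<in>{a..b}. g x \<noteq> 0" "\<forall>x\<in>{a..b}. deriv g x \<noteq> 0"
  obtains s h U where "s = 1 \<or> s = -1" "g = (\<lambda>x. s * h x)" "bessel_moments a b f h U"
proof -
  obtain s U where sign: "s = 1 \<or> s = -1" and U: "open U" "{a..b} \<subseteq> U"
    and pos: "\<forall>x\<in>U. s * g x > 0" and g'_nz: "\<forall>x\<in>U. deriv g x \<noteq> 0"
    using constant_sign_neighbourhood[OF assms(1,3-5)] .
  define h where "h x = s * g x" for x
  have "g = (\<lambda>x. s * h x)" using sign by (auto simp: h_def)
  moreover have smooth_g: "smooth_on U g" by (rule smooth_fun_imp_smooth_on[OF assms(3)])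
  have "deriv h x = s * deriv g x" if "x \<in> U" for x
    unfolding h_def[abs_def] using DERIV_deriv_smooth_on[OF smooth_g that]
    by (intro DERIV_imp_deriv DERIV_cmult)
  then have "bessel_moments a b f h U"
    using assms(1) U pos g'_nz sign smooth_fun_imp_smooth_on[OF assms(2)]
      smooth_on_mult[OF U(1) smooth_on_const smooth_g]
    by unfold_locales (auto simp: h_def[abs_def])
  ultimately show ?thesis using that sign by blast
qed

text \<open>The argument also covers \<open>m = 0\<close>.\<close>
theorem theorem2p3:
  fixes \<nu> a b :: real and f g :: "real \<Rightarrow> real" and m :: nat
  assumes "a < b"
    and "smooth_fun f" and "smooth_fun g"
    and "\<forall>x\<in>{a..b}. g x \<noteq> 0"
    and "\<forall>x\<in>{a..b}. deriv g x \<noteq> 0"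
    and "m \<ge> 1"
  shows "(\<lambda>\<omega>. Hnu \<nu> f g a b \<omega> - QA \<nu> f g a b m \<omega>)
           \<in> O[at_top](\<lambda>\<omega>. complex_of_real (\<omega> powr (- real m - 3 / 2)))"
proof -
  obtain s h U where sign: "s = 1 \<or> s = -1" and g_eq: "g = (\<lambda>x. s * h x)"
    and moments: "bessel_moments a b f h U"
    using bessel_moments_sign_split[OF assms(1-5)] .
  interpret bessel_moments \<nu> a b f h U by (fact moments)
  have phase_factor: "\<forall>\<^sub>F \<omega> in at_top. sign_phase s \<nu> * complex_of_real
          (moment 0 \<omega> - (\<Sum>k=1..m. (-1) ^ (k - 1) / \<omega> ^ k * boundary_term (k - 1) \<omega>))
        = Hnu \<nu> f g a b \<omega> - QA \<nu> f g a b m \<omega>"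
    using eventually_gt_at_top[of 0]
    by eventually_elim
       (simp add: Hnu_eq_moment[OF sign g_eq] QA_eq_boundary_terms[OF sign g_eq] algebra_simps)
  have "(\<lambda>\<omega>. sign_phase s \<nu> * complex_of_real
          (moment 0 \<omega> - (\<Sum>k=1..m. (-1) ^ (k - 1) / \<omega> ^ k * boundary_term (k - 1) \<omega>)))
        \<in> O[at_top](\<lambda>\<omega>. complex_of_real (\<omega> powr (- real m - 3 / 2)))"
    unfolding landau_o.big.cmult_in_iff[OF sign_phase_nonzero] landau_o.big.of_real_iff
    by (rule remainder_bigo)
  from landau_o.big.in_cong[OF phase_factor, THEN iffD1, OF this] show ?thesis .
qed

end
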